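(* Let $\epsilon\in(0,1)$, $C_0>0$ and $A\ge1$. There exist $\delta>0$, $N_0\in\mathbb N$ and $C>0$ such that for every $n\in\mathbb Z$ with $|n|\ge N_0$ and every dyadic number $M\ge1$, the Lebesgue measure of the set $$\{\mu\in\mathbb R:\ M/2\le|\mu|\le 2M,\ \exists\, r\in\mathbb Z \text{ with } A^{-1}|n|\le |r|\le A|n| \text{ and } |\mu-(r^3-r^2-2nr)|\le C_0|r|^{2-\epsilon}\}$$ is at most $CM^{1-\delta}$.
   Context: A dyadic number is one of the form $2^j$, $j\in\mathbb Z_{\ge0}$. *)

theory Defs
  imports "HOL-Analysis.Analysis"
begin

end

theory Submission
  imports Defs
begin

text \<open>Every admissible \<mu> lies within \<open>C\<^sub>0 (A|n|)^(2-\<epsilon>)\<close> of one of the at most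
\<open>3A|n|\<close> values \<open>r^3 - r^2 - 2nr\<close> with \<open>|r| \<le> A|n|\<close>, so the set has measure
\<open>O((A|n|)^(3-\<epsilon>))\<close>. For large \<open>|n|\<close> the cubic term dominates, giving \<open>|\<mu>| \<ge> |r|^3/2\<close> with
\<open>|r| \<ge> |n|/A\<close>; hence the set is empty unless \<open>(A|n|)^3 \<le> 4A^6 M\<close>, and then
\<open>(A|n|)^(3-\<epsilon>) \<le> 4A^6 M^(1-\<epsilon>/3)\<close>. So \<open>\<delta> = \<epsilon>/3\<close> works.\<close>

lemma measure_le_of_subset_UN_intervals:
  fixes S :: "real set" and c :: "'i \<Rightarrow> real" and w :: real
  assumes "finite I" and "S \<subseteq> (\<Union>i\<in>I. {c i - w .. c i + w})" and "0 \<le> w"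
  shows "measure lborel S \<le> card I * (2 * w)"
proof -
  have "measure lborel S \<le> measure lborel (\<Union>i\<in>I. {c i - w .. c i + w})"
  proof (cases "S \<in> sets lborel")
    case True
    then show ?thesis
      using assms by (intro measure_mono_fmeasurable) (auto intro: fmeasurable_compact)
  qed (simp add: measure_notin_sets)
  also have "\<dots> \<le> (\<Sum>i\<in>I. measure lborel {c i - w .. c i + w})"
    by (rule measure_UNION_le) (use assms in auto)
  also have "\<dots> = card I * (2 * w)"
    using assms by simp
  finally show ?thesis .
qed

lemma powr_three_minus_le:
  fixes y x B \<epsilon> :: real
  assumes "1 \<le> y" and "y^3 \<le> B * x" and "0 < x" and "1 \<le> B" and "0 \<le> \<epsilon>" and "\<epsilon> \<le> 3"
  shows "y powr (3 - \<epsilon>) \<le> B * x powr (1 - \<epsilon>/3)"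
proof -
  have "y powr (3 - \<epsilon>) = (y powr 3) powr (1 - \<epsilon>/3)"
    by (simp add: powr_powr right_diff_distrib)
  also have "\<dots> = (y^3) powr (1 - \<epsilon>/3)"
    using assms(1) by simp
  also have "\<dots> \<le> (B * x) powr (1 - \<epsilon>/3)"
    using assms by (intro powr_mono2) auto
  also have "\<dots> = B powr (1 - \<epsilon>/3) * x powr (1 - \<epsilon>/3)"
    using assms by (simp add: powr_mult)
  also have "\<dots> \<le> B * x powr (1 - \<epsilon>/3)"
    using assms powr_mono[of "1 - \<epsilon>/3" 1 B] by (intro mult_right_mono) auto
  finally show ?thesis .
qed

lemma cube_le_twice_abs_if_near_cubic:
  fixes r n \<mu> A C :: real
  assumes n_le: "\<bar>n\<bar> \<le> A * \<bar>r\<bar>"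
    and near: "\<bar>\<mu> - (r^3 - r^2 - 2*n*r)\<bar> \<le> C * r^2"
    and r_large: "2 * (1 + 2*A + C) \<le> \<bar>r\<bar>"
  shows "\<bar>r\<bar>^3 \<le> 2 * \<bar>\<mu>\<bar>"
proof -
  have "\<bar>2*n*r\<bar> \<le> 2*A*r^2"
    using mult_right_mono[OF n_le abs_ge_zero[of r]] by (simp add: abs_mult power2_eq_square)
  moreover have "\<bar>r^3\<bar> = \<bar>r\<bar>^3" and "\<bar>r^2\<bar> = r^2"
    by (simp_all add: power_abs)
  moreover have "\<bar>r^3\<bar> \<le> \<bar>r^3 - r^2 - 2*n*r\<bar> + \<bar>r^2\<bar> + \<bar>2*n*r\<bar>"
    by linarith
  ultimately have "\<bar>r\<bar>^3 - (1 + 2*A)*r^2 \<le> \<bar>r^3 - r^2 - 2*n*r\<bar>"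
    by (simp add: algebra_simps)
  then have "\<bar>r\<bar>^3 - (1 + 2*A + C)*r^2 \<le> \<bar>\<mu>\<bar>"
    using near by (simp add: algebra_simps)
  moreover have "(1 + 2*A + C) * r^2 \<le> \<bar>r\<bar>^3 / 2"
  proof -
    have cube: "\<bar>r\<bar> * r^2 = \<bar>r\<bar>^3"
      by (metis power2_abs power_Suc numeral_2_eq_2 numeral_3_eq_3)
    have "(1 + 2*A + C) * r^2 \<le> (\<bar>r\<bar> / 2) * r^2"
      using r_large by (intro mult_right_mono) auto
    also have "\<dots> = \<bar>r\<bar>^3 / 2"
      using cube by (metis times_divide_eq_left mult.commute)
    finally show ?thesis .
  qed
  ultimately show ?thesis by linarith
qed

definition near_cubic_value :: "real \<Rightarrow> real \<Rightarrow> real \<Rightarrow> int \<Rightarrow> real \<Rightarrow> bool" where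
  "near_cubic_value \<epsilon> C\<^sub>0 A n \<mu> \<longleftrightarrow>
     (\<exists>r::int. \<bar>real_of_int n\<bar> / A \<le> \<bar>real_of_int r\<bar> \<and> \<bar>real_of_int r\<bar> \<le> A * \<bar>real_of_int n\<bar> \<and>
        \<bar>\<mu> - real_of_int (r^3 - r^2 - 2*n*r)\<bar> \<le> C\<^sub>0 * \<bar>real_of_int r\<bar> powr (2 - \<epsilon>))"

lemma cube_le_of_near_cubic_value:
  fixes \<epsilon> C\<^sub>0 A x \<mu> :: real and n :: int
  assumes "0 \<le> \<epsilon>" and "0 < C\<^sub>0" and "1 \<le> A"
    and n_large: "2 * A * (1 + 2*A + C\<^sub>0) \<le> \<bar>real_of_int n\<bar>"
    and "near_cubic_value \<epsilon> C\<^sub>0 A n \<mu>" and "\<bar>\<mu>\<bar> \<le> 2 * x"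
  shows "(A * \<bar>real_of_int n\<bar>)^3 \<le> 4 * A^6 * x"
proof -
  define a where "a = \<bar>real_of_int n\<bar>"
  obtain r :: int where r_lower: "a / A \<le> \<bar>real_of_int r\<bar>"
    and near: "\<bar>\<mu> - real_of_int (r^3 - r^2 - 2*n*r)\<bar> \<le> C\<^sub>0 * \<bar>real_of_int r\<bar> powr (2 - \<epsilon>)"
    using assms(5) unfolding near_cubic_value_def a_def by blast
  have a_le: "a \<le> A * \<bar>real_of_int r\<bar>"
    using r_lower assms(3) by (simp add: divide_le_eq mult.commute)
  have "2 * (1 + 2*A + C\<^sub>0) \<le> a / A"
    using n_large assms(3) unfolding a_def by (simp add: pos_le_divide_eq mult_ac)
  then have r_large: "2 * (1 + 2*A + C\<^sub>0) \<le> \<bar>real_of_int r\<bar>"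
    using r_lower by linarith
  then have "1 \<le> \<bar>real_of_int r\<bar>"
    using assms(2,3) by (smt (verit))
  then have "\<bar>real_of_int r\<bar> powr (2 - \<epsilon>) \<le> (real_of_int r)^2"
    using assms(1) powr_mono[of "2 - \<epsilon>" 2 "\<bar>real_of_int r\<bar>"] by simp
  then have "\<bar>\<mu> - real_of_int (r^3 - r^2 - 2*n*r)\<bar> \<le> C\<^sub>0 * (real_of_int r)^2"
    using near assms(2) by (smt (verit) mult_left_mono)
  then have "\<bar>real_of_int r\<bar>^3 \<le> 2 * \<bar>\<mu>\<bar>"
    using a_le r_large unfolding a_def
    by (intro cube_le_twice_abs_if_near_cubic[where n = "real_of_int n" and A = A and C = C\<^sub>0]) auto
  have "(A * a)^3 \<le> (A * (A * \<bar>real_of_int r\<bar>))^3"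
    using a_le assms(3) unfolding a_def by (intro power_mono mult_left_mono) auto
  also have "\<dots> = A^6 * \<bar>real_of_int r\<bar>^3"
    by (simp add: power_mult_distrib eval_nat_numeral)
  also have "\<dots> \<le> A^6 * (4 * x)"
    using \<open>\<bar>real_of_int r\<bar>^3 \<le> 2 * \<bar>\<mu>\<bar>\<close> assms(6) by (intro mult_left_mono) auto
  finally show ?thesis
    unfolding a_def by (simp add: mult_ac)
qed

lemma measure_near_cubic_values_le:
  fixes \<epsilon> C\<^sub>0 A x :: real and n :: int and S :: "real set"
  assumes "0 \<le> \<epsilon>" and "\<epsilon> \<le> 2" and "0 < C\<^sub>0" and "1 \<le> A" and "0 < x"
    and n_large: "2 * A * (1 + 2*A + C\<^sub>0) \<le> \<bar>real_of_int n\<bar>"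
    and S: "S \<subseteq> {\<mu>. \<bar>\<mu>\<bar> \<le> 2 * x \<and> near_cubic_value \<epsilon> C\<^sub>0 A n \<mu>}"
  shows "measure lborel S \<le> 24 * C\<^sub>0 * A^6 * x powr (1 - \<epsilon>/3)"
proof (cases "S = {}")
  case False
  define a where "a = \<bar>real_of_int n\<bar>"
  define K where "K = \<lfloor>A * a\<rfloor>"
  define w where "w = C\<^sub>0 * (A * a) powr (2 - \<epsilon>)"
  have "1 * 1 \<le> A * (1 + 2*A + C\<^sub>0)"
    using assms(3,4) by (intro mult_mono) auto
  then have "1 \<le> a"
    using n_large unfolding a_def mult.assoc by linarith
  then have Aa: "1 \<le> A * a"
    using assms(4) mult_mono[of 1 A 1 a] by simp
  obtain \<mu> where "\<mu> \<in> S" using False by blast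
  then have scale: "(A * a)^3 \<le> 4 * A^6 * x"
    using S assms unfolding a_def by (intro cube_le_of_near_cubic_value) auto
  have cover: "S \<subseteq> (\<Union>r\<in>{-K..K}. {real_of_int (r^3 - r^2 - 2*n*r) - w .. real_of_int (r^3 - r^2 - 2*n*r) + w})"
  proof
    fix \<mu> assume "\<mu> \<in> S"
    then obtain r :: int where r_upper: "\<bar>real_of_int r\<bar> \<le> A * a"
      and near: "\<bar>\<mu> - real_of_int (r^3 - r^2 - 2*n*r)\<bar> \<le> C\<^sub>0 * \<bar>real_of_int r\<bar> powr (2 - \<epsilon>)"
      using S unfolding near_cubic_value_def a_def by blast
    have "r \<le> K" and "-r \<le> K"
      using r_upper unfolding K_def le_floor_iff by (auto simp: abs_le_iff)
    then have "r \<in> {-K..K}"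
      by simp
    moreover have "\<bar>real_of_int r\<bar> powr (2 - \<epsilon>) \<le> (A * a) powr (2 - \<epsilon>)"
      using r_upper assms(2) by (intro powr_mono2) auto
    then have "\<bar>\<mu> - real_of_int (r^3 - r^2 - 2*n*r)\<bar> \<le> w"
      using near assms(3) unfolding w_def by (smt (verit) mult_left_mono)
    ultimately show "\<mu> \<in> (\<Union>r\<in>{-K..K}. {real_of_int (r^3 - r^2 - 2*n*r) - w .. real_of_int (r^3 - r^2 - 2*n*r) + w})"
      by (intro UN_I[of r]) (auto simp: abs_le_iff)
  qed
  have "measure lborel S \<le> card {-K..K} * (2 * w)"
    using cover assms(3) unfolding w_def by (intro measure_le_of_subset_UN_intervals) auto
  also have "\<dots> \<le> (3 * (A * a)) * (2 * w)"
  proof (rule mult_right_mono)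
    have "real_of_int K \<le> A * a"
      unfolding K_def by simp
    then show "card {-K..K} \<le> 3 * (A * a)"
      using Aa by simp
  qed (use assms(3) in \<open>simp add: w_def\<close>)
  also have "\<dots> = 6 * C\<^sub>0 * (A * a) powr (3 - \<epsilon>)"
  proof -
    have "(A * a) powr (3 - \<epsilon>) = (A * a) * (A * a) powr (2 - \<epsilon>)"
      using Aa powr_add[of "A * a" 1 "2 - \<epsilon>"] by simp
    then show ?thesis
      using Aa unfolding w_def by simp
  qed
  also have "\<dots> \<le> 6 * C\<^sub>0 * (4 * A^6 * x powr (1 - \<epsilon>/3))"
  proof -
    have "1 \<le> 4 * A^6"
      using one_le_power[OF assms(4), of 6] by linarith
    then show ?thesis
      using assms by (intro mult_left_mono powr_three_minus_le[OF Aa scale]) auto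
  qed
  finally show ?thesis by simp
qed (use assms in simp)

theorem lemma3p4:
  fixes \<epsilon> C\<^sub>0 A :: real
  assumes "0 < \<epsilon>" and "\<epsilon> < 1" and "C\<^sub>0 > 0" and "A \<ge> 1"
  shows "\<exists>\<delta>>0. \<exists>N\<^sub>0::nat. \<exists>C>0.
    \<forall>(n::int) (j::nat). \<bar>n\<bar> \<ge> int N\<^sub>0 \<longrightarrow>
      measure lborel
        {\<mu>::real. (2::real)^j / 2 \<le> \<bar>\<mu>\<bar> \<and> \<bar>\<mu>\<bar> \<le> 2 * 2^j \<and>
           (\<exists>r::int. \<bar>real_of_int n\<bar> / A \<le> \<bar>real_of_int r\<bar> \<and>
                      \<bar>real_of_int r\<bar> \<le> A * \<bar>real_of_int n\<bar> \<and>
                      \<bar>\<mu> - real_of_int (r^3 - r^2 - 2*n*r)\<bar> \<le> C\<^sub>0 * \<bar>real_of_int r\<bar> powr (2 - \<epsilon>))}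
      \<le> C * ((2::real)^j) powr (1 - \<delta>)"
proof (rule exI[of _ "\<epsilon>/3"], intro conjI exI[of _ "nat \<lceil>2 * A * (1 + 2*A + C\<^sub>0)\<rceil>"]
    exI[of _ "24 * C\<^sub>0 * A^6"] allI impI measure_near_cubic_values_le)
  fix n :: int and j :: nat
  assume "int (nat \<lceil>2 * A * (1 + 2*A + C\<^sub>0)\<rceil>) \<le> \<bar>n\<bar>"
  then have "\<lceil>2 * A * (1 + 2*A + C\<^sub>0)\<rceil> \<le> \<bar>n\<bar>"
    by linarith
  then show "2 * A * (1 + 2*A + C\<^sub>0) \<le> \<bar>real_of_int n\<bar>"
    by (simp add: ceiling_le_iff)
qed (use assms in \<open>auto simp: near_cubic_value_def\<close>)

end
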